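(* Let $\Phi$ be a positive, trace-preserving, unital (bistochastic) linear map on hermitian $2\times2$ matrices of the form $$\Phi\big(\tfrac12(x_0I+\vec x\cdot\vec\sigma)\big)=\tfrac12\big(x_0I+(\Lambda\vec x)\cdot\vec\sigma\big),\qquad \Lambda=\mathrm{diag}(\lambda_1,\lambda_2,\lambda_3).$$ Let $w=\max(\lambda_1^2,\lambda_2^2,\lambda_3^2)$. Then the concurrence of $\Phi$ at the state $\rho=\tfrac12(I+\vec x\cdot\vec\sigma)$ (with $x_0=1$) is $$C_\Phi(\rho)=\sqrt{(1-w)x_0^2+\sum_{i=1}^3(w-\lambda_i^2)x_i^2}.$$ This convex roof is flat.
   Context: States of a qubit are $\rho=\tfrac12(x_0I+\vec x\cdot\vec\sigma)$ with $x_0=1$ and $|\vec x|\le1$, where $\vec\sigma$ are the Pauli matrices. Pure states are those with $|\vec x|=1$. The concurrence of a positive trace-preserving map $\Phi$ is defined as follows. For a pure state $\pi$, $C_\Phi(\pi)=2\sqrt{\det\Phi(\pi)}$. For a general state, $C_\Phi(\rho)=\min\sum_j p_jC_\Phi(\pi_j)$, where the minimum is over all decompositions $\rho=\sum_j p_j\pi_j$ into pure states with $p_j>0$ and $\sum_j p_j=1$. A convex roof is flat if the Bloch ball is foliated into leaves, each the convex hull of pure states, on each of which the function is constant. *)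

theory Defs
  imports "HOL-Analysis.Analysis"
begin

type_synonym cmat = "complex^2^2"

definition pauli :: "3 \<Rightarrow> cmat" where
  "pauli k =
     (if k = 1 then (\<chi> i j. if i = j then 0 else 1)
      else if k = 2 then (\<chi> i j. if i = j then 0 else if i = 1 then - \<i> else \<i>)
      else (\<chi> i j. if i \<noteq> j then 0 else if i = 1 then 1 else -1))"

definition bloch :: "real \<Rightarrow> real^3 \<Rightarrow> cmat" where
  "bloch x0 x = (1/2) *\<^sub>R (x0 *\<^sub>R mat 1 + (\<Sum>k\<in>UNIV. (x $ k) *\<^sub>R pauli k))"

text \<open>The linear map Phi with Bloch matrix diag(lam): coordinates x0 = tr M, x_k = tr (M sigma_k).\<close>
definition phi :: "real^3 \<Rightarrow> cmat \<Rightarrow> cmat" where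
  "phi lam M = bloch (Re (trace M)) (\<chi> k. lam $ k * Re (trace (M ** pauli k)))"

definition hermitian :: "cmat \<Rightarrow> bool" where
  "hermitian M \<longleftrightarrow> (\<forall>i j. M $ i $ j = cnj (M $ j $ i))"

definition psd :: "cmat \<Rightarrow> bool" where
  "psd M \<longleftrightarrow> hermitian M \<and>
     (\<forall>v::complex^2. 0 \<le> Re (\<Sum>i\<in>UNIV. \<Sum>j\<in>UNIV. cnj (v $ i) * M $ i $ j * v $ j))"

definition positive_map :: "(cmat \<Rightarrow> cmat) \<Rightarrow> bool" where
  "positive_map \<Phi> \<longleftrightarrow> (\<forall>M. psd M \<longrightarrow> psd (\<Phi> M))"

definition qubit_states :: "cmat set" where
  "qubit_states = {bloch 1 x | x. norm x \<le> 1}"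

definition pure_states :: "cmat set" where
  "pure_states = {bloch 1 x | x. norm x = 1}"

definition conc_pure :: "(cmat \<Rightarrow> cmat) \<Rightarrow> cmat \<Rightarrow> real" where
  "conc_pure \<Phi> \<pi> = 2 * sqrt (Re (det (\<Phi> \<pi>)))"

definition conc_values :: "(cmat \<Rightarrow> cmat) \<Rightarrow> cmat \<Rightarrow> real set" where
  "conc_values \<Phi> \<rho> =
     {(\<Sum>j\<in>J. p j * conc_pure \<Phi> (\<pi> j)) | J p \<pi>.
        finite (J::nat set) \<and> J \<noteq> {} \<and> (\<forall>j\<in>J. 0 < p j \<and> \<pi> j \<in> pure_states) \<and>
        (\<Sum>j\<in>J. p j) = 1 \<and> \<rho> = (\<Sum>j\<in>J. p j *\<^sub>R \<pi> j)}"

text \<open>Concurrence: the minimum (infimum; attainment is stated separately) of conc_values.\<close>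
definition concurrence :: "(cmat \<Rightarrow> cmat) \<Rightarrow> cmat \<Rightarrow> real" where
  "concurrence \<Phi> \<rho> = Inf (conc_values \<Phi> \<rho>)"

definition flat_roof :: "(cmat \<Rightarrow> real) \<Rightarrow> bool" where
  "flat_roof f \<longleftrightarrow> (\<exists>F. \<Union>F = qubit_states \<and>
      (\<forall>A\<in>F. \<forall>B\<in>F. A \<noteq> B \<longrightarrow> A \<inter> B = {}) \<and>
      (\<forall>L\<in>F. (\<exists>P. P \<subseteq> pure_states \<and> L = convex hull P) \<and>
               (\<forall>\<rho>\<in>L. \<forall>\<sigma>\<in>L. f \<rho> = f \<sigma>)))"

end

theory Submission
  imports Defs
begin

(* In Bloch coordinates phi lam maps the state bloch 1 y to bloch 1 (lam * y), so on a pure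
   state (norm y = 1) the concurrence is 2 sqrt det = sqrt (1 - sum lam_i^2 y_i^2).  With
   w = max lam_i^2 this equals G y = sqrt ((1 - w) + sum (w - lam_i^2) y_i^2), and G is the
   norm of an affine map of y, hence convex (this needs w <= 1, which positivity forces).
   Convexity gives the lower bound C(rho) >= G(x) for every pure-state decomposition.
   Choosing k with lam_k^2 = w, G does not depend on the k-th coordinate, so splitting x along
   the chord through x parallel to the k-th axis into two pure states attains the bound.
   These chords are the leaves of the flat roof. *)

section \<open>Bloch coordinates\<close>

lemma bloch_entries:
  "bloch x0 x $ 1 $ 1 = complex_of_real ((x0 + x$3)/2)"
  "bloch x0 x $ 1 $ 2 = Complex (x$1/2) (- x$2/2)"
  "bloch x0 x $ 2 $ 1 = Complex (x$1/2) (x$2/2)"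
  "bloch x0 x $ 2 $ 2 = complex_of_real ((x0 - x$3)/2)"
  by (simp_all add: bloch_def pauli_def sum_3 mat_def complex_eq_iff)

lemma hermitian_bloch: "hermitian (bloch x0 z)"
  unfolding hermitian_def forall_2 by (simp add: bloch_entries complex_eq_iff)

lemma trace_bloch: "trace (bloch x0 x) = complex_of_real x0"
  by (simp add: trace_def sum_2 bloch_entries complex_eq_iff field_simps)

lemma trace_bloch_pauli: "trace (bloch x0 x ** pauli k) = complex_of_real (x$k)"
  using exhaust_3[of k]
  by (auto simp: trace_def sum_2 bloch_entries complex_eq_iff matrix_matrix_mult_def pauli_def
      field_simps)

lemma phi_bloch: "phi lam (bloch x0 x) = bloch x0 (\<chi> k. lam$k * x$k)"
  by (simp add: phi_def trace_bloch trace_bloch_pauli)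

lemma det_bloch: "Re (det (bloch x0 x)) = (x0^2 - (x$1^2 + x$2^2 + x$3^2))/4"
  by (simp add: det_2 bloch_entries power2_eq_square field_simps)

text \<open>Bloch coordinates are unique, so decompositions of states are decompositions of vectors.\<close>

lemma bloch_eq_iff: "bloch x0 x = bloch y0 y \<longleftrightarrow> x0 = y0 \<and> x = y"
proof
  assume "bloch x0 x = bloch y0 y"
  then have "bloch x0 x $ i $ j = bloch y0 y $ i $ j" for i j by simp
  from this[of 1 1] this[of 2 2] this[of 1 2] show "x0 = y0 \<and> x = y"
    by (auto simp: bloch_entries vec_eq_iff forall_3 complex_eq_iff)
qed simp

lemma bloch_sum:
  "(\<Sum>j\<in>J. p j *\<^sub>R bloch (a j) (y j)) = bloch (\<Sum>j\<in>J. p j * a j) (\<Sum>j\<in>J. p j *\<^sub>R y j)"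
  by (simp add: vec_eq_iff forall_2 bloch_entries complex_eq_iff sum_component Re_sum Im_sum
      sum_divide_distrib[symmetric] sum.distrib[symmetric] sum_subtractf[symmetric] sum_negf
      algebra_simps)

lemma bloch_mix:
  "u *\<^sub>R bloch a y + v *\<^sub>R bloch b z = bloch (u * a + v * b) (u *\<^sub>R y + v *\<^sub>R z)"
  by (simp add: vec_eq_iff forall_2 bloch_entries complex_eq_iff field_simps)

lemma norm_sq_vec: "norm (y::real^'n)^2 = (\<Sum>i\<in>UNIV. (y$i)^2)"
  unfolding norm_vec_def L2_set_def by (simp add: sum_nonneg)

section \<open>Positivity bounds the diagonal\<close>

lemma quadratic_form_bloch:
  "Re (\<Sum>i\<in>UNIV. \<Sum>j\<in>UNIV. cnj (v $ i) * bloch x0 z $ i $ j * v $ j) =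
    (x0 + z$3)/2 * (Re (v$1)^2 + Im (v$1)^2) + (x0 - z$3)/2 * (Re (v$2)^2 + Im (v$2)^2)
    + z$1 * (Re (v$1) * Re (v$2) + Im (v$1) * Im (v$2))
    + z$2 * (Re (v$1) * Im (v$2) - Im (v$1) * Re (v$2))"
  by (simp add: sum_2 bloch_entries algebra_simps power2_eq_square add_divide_distrib
      diff_divide_distrib)

lemma psd_axis_state: "psd (bloch 1 (axis k 1))"
  unfolding psd_def
proof (intro conjI allI hermitian_bloch)
  fix v :: "complex^2"
  have sq: "0 \<le> ((a+c)^2 + (b+d)^2)/2" "0 \<le> ((a+d)^2 + (b-c)^2)/2" for a b c d :: real
    by auto
  show "0 \<le> Re (\<Sum>i\<in>UNIV. \<Sum>j\<in>UNIV. cnj (v $ i) * bloch 1 (axis k 1) $ i $ j * v $ j)"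
    using exhaust_3[of k] sq(1)[of "Re (v$1)" "Re (v$2)" "Im (v$1)" "Im (v$2)"]
      sq(2)[of "Re (v$1)" "Im (v$2)" "Im (v$1)" "Re (v$2)"]
    unfolding quadratic_form_bloch
    by (auto simp: axis_def power2_eq_square algebra_simps add_divide_distrib
        diff_divide_distrib)
qed

text \<open>A positive semidefinite state has all Bloch coordinates in [-1, 1]; it suffices to
  test the form on the vectors (1, c + i d) and (0, 1).\<close>

lemma psd_bloch_coordinate:
  assumes "psd (bloch 1 z)"
  shows "\<bar>z$i\<bar> \<le> 1"
proof -
  have form: "0 \<le> Re (\<Sum>i\<in>UNIV. \<Sum>j\<in>UNIV. cnj (v $ i) * bloch 1 z $ i $ j * v $ j)" for v
    using assms by (simp add: psd_def)
  have test: "0 \<le> (1+z$3)/2 + (1-z$3)/2*(c^2+d^2) + z$1 * c + z$2 * d" for c d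
    using form[of "\<chi> j. if j = 1 then 1 else Complex c d"] unfolding quadratic_form_bloch
    by simp
  have "0 \<le> 1 - z$3"
    using form[of "\<chi> j. if j = 1 then 0 else 1"] unfolding quadratic_form_bloch by simp
  moreover have "0 \<le> 1 + z$1" using test[of 1 0] by (simp add: field_simps)
  moreover have "0 \<le> 1 - z$1" using test[of "-1" 0] by (simp add: field_simps)
  moreover have "0 \<le> 1 + z$2" using test[of 0 1] by (simp add: field_simps)
  moreover have "0 \<le> 1 - z$2" using test[of 0 "-1"] by (simp add: field_simps)
  moreover have "0 \<le> 1 + z$3" using test[of 0 0] by (simp add: field_simps)
  ultimately show ?thesis
    using exhaust_3[of i] by (auto simp: abs_le_iff)
qed

lemma positive_phi_coefficient:
  assumes "positive_map (phi lam)"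
  shows "(lam$i)^2 \<le> 1"
proof -
  have "psd (phi lam (bloch 1 (axis i 1)))"
    using assms psd_axis_state by (simp add: positive_map_def)
  then have "\<bar>(\<chi> k. lam$k * axis i 1 $ k) $ i\<bar> \<le> 1"
    unfolding phi_bloch by (rule psd_bloch_coordinate)
  then show ?thesis by (simp add: axis_def abs_square_le_1)
qed

section \<open>The concurrence function on the Bloch ball\<close>

definition conc_formula :: "real^3 \<Rightarrow> real \<Rightarrow> real^3 \<Rightarrow> real" where
  "conc_formula lam w y = sqrt ((1 - w) * 1^2 + (\<Sum>i\<in>UNIV. (w - (lam $ i)^2) * (y $ i)^2))"

lemma conc_pure_phi:
  assumes "norm y = 1"
  shows "conc_pure (phi lam) (bloch 1 y) = conc_formula lam w y"
proof -
  define A where "A = 1 - ((lam$1*y$1)^2 + (lam$2*y$2)^2 + (lam$3*y$3)^2)"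
  have "Re (det (phi lam (bloch 1 y))) = A/4"
    by (simp add: phi_bloch det_bloch A_def)
  moreover have "2 * sqrt (A/4) = sqrt A"
    by (simp add: real_sqrt_divide)
  ultimately have conc: "conc_pure (phi lam) (bloch 1 y) = sqrt A"
    unfolding conc_pure_def by (simp only:)
  have "y$1^2 + y$2^2 + y$3^2 = 1"
    using assms norm_sq_vec[of y] by (simp add: sum_3)
  moreover have "(1 - w) * 1^2 + (\<Sum>i\<in>UNIV. (w - (lam $ i)^2) * (y $ i)^2)
      = 1 - w + w * (y$1^2 + y$2^2 + y$3^2) - ((lam$1*y$1)^2 + (lam$2*y$2)^2 + (lam$3*y$3)^2)"
    by (simp add: sum_3 algebra_simps power_mult_distrib)
  ultimately have "(1 - w) * 1^2 + (\<Sum>i\<in>UNIV. (w - (lam $ i)^2) * (y $ i)^2) = A"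
    unfolding A_def by simp
  with conc show ?thesis by (simp add: conc_formula_def)
qed

lemma convex_on_norm_affine:
  assumes "linear f"
  shows "convex_on UNIV (\<lambda>x. norm (c + f x))"
proof (rule convex_onI)
  fix t :: real and x y assume t: "0 < t" "t < 1"
  have "f ((1 - t) *\<^sub>R x + t *\<^sub>R y) = (1 - t) *\<^sub>R f x + t *\<^sub>R f y"
    by (simp only: linear_add[OF assms] linear_scale[OF assms])
  then have "c + f ((1 - t) *\<^sub>R x + t *\<^sub>R y) = (1 - t) *\<^sub>R (c + f x) + t *\<^sub>R (c + f y)"
    by (simp add: algebra_simps)
  also have "norm \<dots> \<le> (1 - t) * norm (c + f x) + t * norm (c + f y)"
    using t by (metis abs_of_nonneg less_imp_le norm_scaleR norm_triangle_ineq diff_ge_0_iff_ge)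
  finally show "norm (c + f ((1 - t) *\<^sub>R x + t *\<^sub>R y))
      \<le> (1 - t) * norm (c + f x) + t * norm (c + f y)" .
qed simp

text \<open>If w dominates every lam_i^2 and w \<le> 1, the formula is the
  Euclidean norm of the vector (sqrt (1 - w), sqrt (w - lam_i^2) y_i), hence convex.\<close>

lemma convex_conc_formula:
  assumes "w \<le> 1" and "\<forall>i. (lam$i)^2 \<le> w"
  shows "convex_on UNIV (conc_formula lam w)"
proof -
  define D where "D y = ((\<chi> i. sqrt (w - (lam$i)^2) * y$i) :: real^3)" for y :: "real^3"
  have "linear (\<lambda>y. (0::real, D y))"
    by (rule linearI) (simp_all add: D_def vec_eq_iff algebra_simps)
  then have "convex_on UNIV (\<lambda>y. norm ((sqrt (1 - w), 0) + (0::real, D y)))"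
    by (rule convex_on_norm_affine)
  moreover have "norm ((sqrt (1 - w), 0) + (0::real, D y)) = conc_formula lam w y" for y
  proof -
    have "norm (D y)^2 = (\<Sum>i\<in>UNIV. (w - (lam $ i)^2) * (y $ i)^2)"
      unfolding norm_sq_vec D_def using assms(2) by (simp add: power_mult_distrib)
    then show ?thesis
      using assms(1) by (simp add: norm_Pair conc_formula_def)
  qed
  ultimately show ?thesis by simp
qed

lemma conc_formula_indep:
  assumes "(lam$k)^2 = w" and "\<forall>i. i \<noteq> k \<longrightarrow> y$i = z$i"
  shows "conc_formula lam w y = conc_formula lam w z"
proof -
  have "(\<Sum>i\<in>UNIV. (w - (lam $ i)^2) * (y $ i)^2) = (\<Sum>i\<in>UNIV. (w - (lam $ i)^2) * (z $ i)^2)"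
    using assms by (intro sum.cong) auto
  then show ?thesis unfolding conc_formula_def by simp
qed

section \<open>Chords parallel to a coordinate axis\<close>

lemma chord_decomposition:
  fixes x :: "real^'n"
  assumes "norm x < 1"
  obtains yp ym p where "0 < p" "p < 1" "norm yp = 1" "norm ym = 1"
    "\<forall>i. i \<noteq> k \<longrightarrow> yp$i = x$i \<and> ym$i = x$i" "x = p *\<^sub>R yp + (1 - p) *\<^sub>R ym"
proof -
  define s where "s = norm x ^ 2"
  have s1: "s < 1"
    using assms unfolding s_def by (simp add: abs_square_less_1)
  define r where "r = sqrt (1 - s + (x$k)^2)"
  have r2: "r^2 = 1 - s + (x$k)^2"
    unfolding r_def using s1 by simp
  have "sqrt ((x$k)^2) < r"
    unfolding r_def using s1 by (intro real_sqrt_less_mono) simp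
  then have xr: "\<bar>x$k\<bar> < r" by simp
  define end_at where "end_at t = (\<chi> i. if i = k then t else x$i)" for t
  have end_norm: "norm (end_at t) = 1" if "t^2 = r^2" for t
  proof -
    have "norm (end_at t)^2 = (\<Sum>i\<in>UNIV. (x$i)^2 + (if i = k then r^2 - (x$k)^2 else 0))"
      unfolding norm_sq_vec end_at_def using that by (intro sum.cong) auto
    also have "\<dots> = 1" by (simp add: sum.distrib s_def norm_sq_vec r2)
    finally show ?thesis
      using norm_ge_zero[of "end_at t"] by (smt (verit) power2_eq_1_iff)
  qed
  define p where "p = (r + x$k) / (2*r)"
  show ?thesis
  proof
    show "0 < p" "p < 1" unfolding p_def using xr by (auto simp: abs_less_iff)
    show "norm (end_at r) = 1" "norm (end_at (- r)) = 1" by (simp_all add: end_norm)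
    show "\<forall>i. i \<noteq> k \<longrightarrow> end_at r $ i = x$i \<and> end_at (- r) $ i = x$i"
      by (simp add: end_at_def)
    show "x = p *\<^sub>R end_at r + (1 - p) *\<^sub>R end_at (- r)"
      unfolding vec_eq_iff end_at_def p_def using xr by (auto simp: field_simps)
  qed
qed

lemma conc_values_pure:
  assumes "\<pi> \<in> pure_states"
  shows "conc_pure \<Phi> \<pi> \<in> conc_values \<Phi> \<pi>"
  unfolding conc_values_def mem_Collect_eq
  by (rule exI[of _ "{0::nat}"], rule exI[of _ "\<lambda>_. 1"], rule exI[of _ "\<lambda>_. \<pi>"])
    (use assms in simp)

lemma conc_values_mix:
  assumes "\<pi>1 \<in> pure_states" "\<pi>2 \<in> pure_states" "0 < p" "p < 1"
  shows "p * conc_pure \<Phi> \<pi>1 + (1 - p) * conc_pure \<Phi> \<pi>2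
           \<in> conc_values \<Phi> (p *\<^sub>R \<pi>1 + (1 - p) *\<^sub>R \<pi>2)"
  unfolding conc_values_def mem_Collect_eq
  by (rule exI[of _ "{0::nat, 1}"], rule exI[of _ "\<lambda>j. if j = 0 then p else 1 - p"],
      rule exI[of _ "\<lambda>j. if j = 0 then \<pi>1 else \<pi>2"]) (use assms in simp)

lemma conc_values_bloch:
  assumes "v \<in> conc_values \<Phi> (bloch 1 x)"
  obtains J :: "nat set" and p y where "finite J" "J \<noteq> {}" "\<forall>j\<in>J. 0 < p j \<and> norm (y j) = 1"
    "(\<Sum>j\<in>J. p j) = 1" "x = (\<Sum>j\<in>J. p j *\<^sub>R y j)"
    "v = (\<Sum>j\<in>J. p j * conc_pure \<Phi> (bloch 1 (y j)))"
proof -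
  obtain J p \<pi> where J: "v = (\<Sum>j\<in>J. p j * conc_pure \<Phi> (\<pi> j))" "finite (J::nat set)" "J \<noteq> {}"
    "\<forall>j\<in>J. 0 < p j \<and> \<pi> j \<in> pure_states" "(\<Sum>j\<in>J. p j) = 1"
    "bloch 1 x = (\<Sum>j\<in>J. p j *\<^sub>R \<pi> j)"
    using assms unfolding conc_values_def by blast
  have "\<forall>j\<in>J. \<exists>y. \<pi> j = bloch 1 y \<and> norm y = 1"
    using J(4) unfolding pure_states_def by blast
  then obtain y where y: "\<forall>j\<in>J. \<pi> j = bloch 1 (y j) \<and> norm (y j) = 1" by metis
  have "bloch 1 x = (\<Sum>j\<in>J. p j *\<^sub>R bloch 1 (y j))" using J(6) y by simp
  also have "\<dots> = bloch 1 (\<Sum>j\<in>J. p j *\<^sub>R y j)" by (simp add: bloch_sum J(5))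
  finally have "x = (\<Sum>j\<in>J. p j *\<^sub>R y j)" by (simp add: bloch_eq_iff)
  moreover have "v = (\<Sum>j\<in>J. p j * conc_pure \<Phi> (bloch 1 (y j)))"
    unfolding J(1) using y by (intro sum.cong) auto
  ultimately show ?thesis using that J y by blast
qed

text \<open>For w = lam_k^2 = max lam_i^2 \<le> 1: the formula is attained by the chord
  decomposition and is a lower bound by convexity, so it is the concurrence.\<close>

lemma concurrence_phi:
  assumes w1: "w \<le> 1" and lw: "\<forall>i. (lam$i)^2 \<le> w" and k: "(lam$k)^2 = w"
    and x: "norm x \<le> 1"
  shows "conc_formula lam w x \<in> conc_values (phi lam) (bloch 1 x)"
    and "concurrence (phi lam) (bloch 1 x) = conc_formula lam w x"
proof -
  show attained: "conc_formula lam w x \<in> conc_values (phi lam) (bloch 1 x)"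
  proof (cases "norm x = 1")
    case True
    then have "bloch 1 x \<in> pure_states" unfolding pure_states_def by blast
    then show ?thesis
      using conc_values_pure[of "bloch 1 x" "phi lam"] conc_pure_phi[OF True, of lam w] by simp
  next
    case False
    with x have "norm x < 1" by simp
    then obtain yp ym p where d: "0 < p" "p < 1" "norm yp = 1" "norm ym = 1"
      "\<forall>i. i \<noteq> k \<longrightarrow> yp$i = x$i \<and> ym$i = x$i" "x = p *\<^sub>R yp + (1 - p) *\<^sub>R ym"
      by (rule chord_decomposition)
    have "conc_formula lam w yp = conc_formula lam w x"
      "conc_formula lam w ym = conc_formula lam w x"
      using conc_formula_indep[OF k] d(5) by auto
    then have "conc_formula lam w x
        = p * conc_pure (phi lam) (bloch 1 yp) + (1 - p) * conc_pure (phi lam) (bloch 1 ym)"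
      using conc_pure_phi[OF d(3)] conc_pure_phi[OF d(4)] by (simp add: algebra_simps)
    moreover have "bloch 1 x = p *\<^sub>R bloch 1 yp + (1 - p) *\<^sub>R bloch 1 ym"
      unfolding bloch_mix d(6) by simp
    ultimately show ?thesis
      using conc_values_mix[of "bloch 1 yp" "bloch 1 ym" p "phi lam"] d
      unfolding pure_states_def by auto
  qed
  have lower: "conc_formula lam w x \<le> v" if v: "v \<in> conc_values (phi lam) (bloch 1 x)" for v
  proof -
    obtain J :: "nat set" and p y where J: "finite J" "J \<noteq> {}"
      "\<forall>j\<in>J. 0 < p j \<and> norm (y j) = 1" "(\<Sum>j\<in>J. p j) = 1" "x = (\<Sum>j\<in>J. p j *\<^sub>R y j)"
      "v = (\<Sum>j\<in>J. p j * conc_pure (phi lam) (bloch 1 (y j)))"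
      by (rule conc_values_bloch[OF v])
    have "conc_formula lam w x \<le> (\<Sum>j\<in>J. p j * conc_formula lam w (y j))"
      unfolding J(5) using J(3)
      by (intro convex_on_sum[OF J(1,2) convex_conc_formula[OF w1 lw] J(4)]) auto
    also have "\<dots> = v"
      unfolding J(6) using J(3) conc_pure_phi by (intro sum.cong) auto
    finally show ?thesis .
  qed
  show "concurrence (phi lam) (bloch 1 x) = conc_formula lam w x"
    unfolding concurrence_def by (rule cInf_eq_minimum[OF attained lower])
qed

section \<open>Foliation of the Bloch ball by chords\<close>

definition chord :: "3 \<Rightarrow> real^3 \<Rightarrow> cmat set" where
  "chord k z = {bloch 1 y | y. norm y \<le> 1 \<and> (\<forall>i. i \<noteq> k \<longrightarrow> y$i = z$i)}"

definition chord_ends :: "3 \<Rightarrow> real^3 \<Rightarrow> cmat set" where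
  "chord_ends k z = {bloch 1 y | y. norm y = 1 \<and> (\<forall>i. i \<noteq> k \<longrightarrow> y$i = z$i)}"

lemma bloch_in_chord:
  "bloch 1 y \<in> chord k z \<longleftrightarrow> norm y \<le> 1 \<and> (\<forall>i. i \<noteq> k \<longrightarrow> y$i = z$i)"
  unfolding chord_def by (auto simp: bloch_eq_iff)

lemma chords_meet:
  assumes "\<rho> \<in> chord k a" "\<rho> \<in> chord k b"
  shows "chord k a = chord k b"
proof -
  obtain y where "\<rho> = bloch 1 y" using assms(1) unfolding chord_def by blast
  with assms have "\<forall>i. i \<noteq> k \<longrightarrow> a$i = b$i" by (metis bloch_in_chord)
  then show ?thesis unfolding chord_def by metis
qed

lemma convex_chord: "convex (chord k z)"
  unfolding convex_def
proof (intro ballI allI impI)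
  fix u v \<rho> \<sigma> assume h: "\<rho> \<in> chord k z" "\<sigma> \<in> chord k z" "0 \<le> u" "0 \<le> v" "u + v = (1::real)"
  obtain y1 y2 where y: "\<rho> = bloch 1 y1" "\<sigma> = bloch 1 y2"
    using h unfolding chord_def by blast
  with h have y1: "norm y1 \<le> 1" "\<forall>i. i \<noteq> k \<longrightarrow> y1$i = z$i"
    and y2: "norm y2 \<le> 1" "\<forall>i. i \<noteq> k \<longrightarrow> y2$i = z$i" by (simp_all add: bloch_in_chord)
  have "norm (u *\<^sub>R y1 + v *\<^sub>R y2) \<le> u * norm y1 + v * norm y2"
    using h by (metis abs_of_nonneg norm_scaleR norm_triangle_ineq)
  also have "\<dots> \<le> u + v" using h y1 y2 by (intro add_mono mult_left_le) auto
  finally have "norm (u *\<^sub>R y1 + v *\<^sub>R y2) \<le> 1" using h by simp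
  moreover have "\<forall>i. i \<noteq> k \<longrightarrow> (u *\<^sub>R y1 + v *\<^sub>R y2)$i = z$i"
    using y1 y2 h by (simp flip: distrib_right)
  ultimately show "u *\<^sub>R \<rho> + v *\<^sub>R \<sigma> \<in> chord k z"
    unfolding y bloch_mix using h by (simp add: bloch_in_chord)
qed

lemma chord_convex_hull: "chord k z = convex hull (chord_ends k z)"
proof
  show "convex hull (chord_ends k z) \<subseteq> chord k z"
    by (rule hull_minimal) (auto simp: convex_chord chord_ends_def bloch_in_chord)
  show "chord k z \<subseteq> convex hull (chord_ends k z)"
  proof
    fix \<rho> assume "\<rho> \<in> chord k z"
    then obtain y where y: "\<rho> = bloch 1 y" "norm y \<le> 1" "\<forall>i. i \<noteq> k \<longrightarrow> y$i = z$i"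
      unfolding chord_def by blast
    show "\<rho> \<in> convex hull (chord_ends k z)"
    proof (cases "norm y = 1")
      case True
      then have "\<rho> \<in> chord_ends k z" using y unfolding chord_ends_def by blast
      then show ?thesis by (rule hull_inc)
    next
      case False
      with y have "norm y < 1" by simp
      then obtain yp ym p where d: "0 < p" "p < 1" "norm yp = 1" "norm ym = 1"
        "\<forall>i. i \<noteq> k \<longrightarrow> yp$i = y$i \<and> ym$i = y$i" "y = p *\<^sub>R yp + (1 - p) *\<^sub>R ym"
        by (rule chord_decomposition)
      have "bloch 1 yp \<in> chord_ends k z" "bloch 1 ym \<in> chord_ends k z"
        using d(3-5) y(3) unfolding chord_ends_def by auto
      then have "p *\<^sub>R bloch 1 yp + (1 - p) *\<^sub>R bloch 1 ym \<in> convex hull (chord_ends k z)"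
        using d by (intro convexD[OF convex_convex_hull]) (auto intro: hull_inc)
      then show ?thesis unfolding bloch_mix y(1) d(6) by simp
    qed
  qed
qed

lemma flat_roof_chords:
  assumes indep: "\<And>y y'. norm y \<le> 1 \<Longrightarrow> norm y' \<le> 1 \<Longrightarrow> (\<forall>i. i \<noteq> k \<longrightarrow> y$i = y'$i)
                    \<Longrightarrow> f (bloch 1 y) = f (bloch 1 y')"
  shows "flat_roof f"
  unfolding flat_roof_def
proof (intro exI[of _ "chord k ` {z. norm z \<le> 1}"] conjI ballI impI)
  show "\<Union> (chord k ` {z. norm z \<le> 1}) = qubit_states"
    unfolding qubit_states_def by (auto simp: chord_def)
next
  fix A B assume "A \<in> chord k ` {z. norm z \<le> 1}" "B \<in> chord k ` {z. norm z \<le> 1}" "A \<noteq> B"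
  then show "A \<inter> B = {}" using chords_meet by blast
next
  fix L assume "L \<in> chord k ` {z. norm z \<le> 1}"
  then obtain z where "L = chord k z" by blast
  moreover have "chord_ends k z \<subseteq> pure_states"
    unfolding chord_ends_def pure_states_def by blast
  ultimately show "\<exists>P. P \<subseteq> pure_states \<and> L = convex hull P"
    using chord_convex_hull by blast
next
  fix L \<rho> \<sigma> assume "L \<in> chord k ` {z. norm z \<le> 1}" "\<rho> \<in> L" "\<sigma> \<in> L"
  then obtain z y y' where "\<rho> = bloch 1 y" "\<sigma> = bloch 1 y'"
    "bloch 1 y \<in> chord k z" "bloch 1 y' \<in> chord k z"
    unfolding chord_def by blast
  then show "f \<rho> = f \<sigma>" using indep by (simp add: bloch_in_chord)
qed

theorem mainTheorem4:
  fixes lam :: "real^3" and x :: "real^3"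
  assumes "positive_map (phi lam)"
    and "norm x \<le> 1"
  defines "w \<equiv> Max {(lam $ i)^2 | i. i \<in> (UNIV :: 3 set)}"
  shows "concurrence (phi lam) (bloch 1 x)
           = sqrt ((1 - w) * 1^2 + (\<Sum>i\<in>UNIV. (w - (lam $ i)^2) * (x $ i)^2))
       \<and> concurrence (phi lam) (bloch 1 x) \<in> conc_values (phi lam) (bloch 1 x)
       \<and> flat_roof (concurrence (phi lam))"
proof -
  have squares: "{(lam $ i)^2 | i. i \<in> (UNIV :: 3 set)} = (\<lambda>i. (lam $ i)^2) ` UNIV" by auto
  have "w \<in> (\<lambda>i. (lam $ i)^2) ` UNIV"
    unfolding w_def squares by (rule Max_in) auto
  then obtain k where k: "(lam$k)^2 = w" by auto
  have lw: "\<forall>i. (lam$i)^2 \<le> w" unfolding w_def squares by simp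
  have w1: "w \<le> 1" using positive_phi_coefficient[OF assms(1), of k] k by simp
  have "flat_roof (concurrence (phi lam))"
    by (rule flat_roof_chords[of k])
      (simp add: concurrence_phi(2)[OF w1 lw k] conc_formula_indep[OF k])
  then show ?thesis
    using concurrence_phi[OF w1 lw k assms(2)] by (simp add: conc_formula_def)
qed

end
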